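(* Suppose the following holds: for every separable Hilbert space $\mathcal{H}'$ and every pair of orthogonal projections $P', Q'$ on $\mathcal{H}'$ with $\mathcal{K}_{P',Q'} = \mathcal{K}_{1-P',1-Q'} = \{0\}$, there exists a unitary $W$ on $\mathcal{H}'$ with $W P' W^{-1} = Q'$ and $W Q' W^{-1} = P'$. Then for every separable Hilbert space $\mathcal{H}$ and every pair of orthogonal projections $P, Q$ on $\mathcal{H}$, there exists a unitary $U$ on $\mathcal{H}$ with $U P U^{-1} = Q$ and $U Q U^{-1} = P$ if and only if $\dim(\mathcal{K}_{P,Q}) = \dim(\mathcal{K}_{1-P,1-Q})$ (where the dimensions, possibly infinite, are compared as Hilbert space dimensions).
   Context: For orthogonal projections $R, S$ on a Hilbert space, $\mathcal{K}_{R,S} := \operatorname{ran} R \cap \ker S$. Thus $\mathcal{K}_{P,Q} = \operatorname{ran} P \cap \ker Q$ and $\mathcal{K}_{1-P,1-Q} = \ker P \cap \operatorname{ran} Q$. The paper phrases this as: "To prove the theorem (existence of such a unitary iff the dimensions agree), it suffices to prove it in the case $\mathcal{K}_{P,Q} = \mathcal{K}_{1-P,1-Q} = \{0\}$." *)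

theory Defs
  imports "HOL-Analysis.Analysis"
begin

text \<open>HOL-Analysis only provides real inner product spaces, so complex
inner product spaces are introduced here as a type class.  The inner product
is conjugate-linear in the first and linear in the second argument.\<close>

class complex_inner = real_normed_vector +
  fixes scaleC :: "complex \<Rightarrow> 'a \<Rightarrow> 'a" (infixr \<open>*\<^sub>C\<close> 75)
    and cinner :: "'a \<Rightarrow> 'a \<Rightarrow> complex"
  assumes scaleC_add_right: "a *\<^sub>C (x + y) = a *\<^sub>C x + a *\<^sub>C y"
    and scaleC_add_left: "(a + b) *\<^sub>C x = a *\<^sub>C x + b *\<^sub>C x"
    and scaleC_scaleC: "a *\<^sub>C (b *\<^sub>C x) = (a * b) *\<^sub>C x"
    and scaleC_one: "1 *\<^sub>C x = x"
    and scaleR_scaleC: "scaleR r x = (complex_of_real r) *\<^sub>C x"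
    and cinner_commute: "cinner x y = cnj (cinner y x)"
    and cinner_add_right: "cinner x (y + z) = cinner x y + cinner x z"
    and cinner_scaleC_right: "cinner x (a *\<^sub>C y) = a * cinner x y"
    and cinner_self_real: "Im (cinner x x) = 0"
    and cinner_self_nonneg: "0 \<le> Re (cinner x x)"
    and cinner_self_eq_0: "cinner x x = 0 \<longleftrightarrow> x = 0"
    and norm_eq_sqrt_cinner: "norm x = sqrt (Re (cinner x x))"

class chilbert = complex_inner + complete_space

text \<open>A (sub-)Hilbert space is represented by its carrier, a closed complex
linear subspace \<open>V\<close> of an ambient Hilbert space type.  Operators on \<open>V\<close>
are functions whose values are only relevant on \<open>V\<close>.\<close>

definition csubspace :: "'a::complex_inner set \<Rightarrow> bool" where
  "csubspace V \<longleftrightarrow> 0 \<in> V \<and> (\<forall>x\<in>V. \<forall>y\<in>V. x + y \<in> V) \<and> (\<forall>a. \<forall>x\<in>V. a *\<^sub>C x \<in> V)"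

definition closed_csubspace :: "'a::complex_inner set \<Rightarrow> bool" where
  "closed_csubspace V \<longleftrightarrow> csubspace V \<and> closed V"

definition separable_set :: "'a::metric_space set \<Rightarrow> bool" where
  "separable_set V \<longleftrightarrow> (\<exists>D. countable D \<and> D \<subseteq> V \<and> V \<subseteq> closure D)"

definition bounded_op_on :: "'a::complex_inner set \<Rightarrow> ('a \<Rightarrow> 'a) \<Rightarrow> bool" where
  "bounded_op_on V T \<longleftrightarrow>
     (\<forall>x\<in>V. T x \<in> V) \<and>
     (\<forall>x\<in>V. \<forall>y\<in>V. T (x + y) = T x + T y) \<and>
     (\<forall>a. \<forall>x\<in>V. T (a *\<^sub>C x) = a *\<^sub>C T x) \<and>
     (\<exists>K. \<forall>x\<in>V. norm (T x) \<le> K * norm x)"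

definition orth_proj_on :: "'a::complex_inner set \<Rightarrow> ('a \<Rightarrow> 'a) \<Rightarrow> bool" where
  "orth_proj_on V P \<longleftrightarrow> bounded_op_on V P \<and>
     (\<forall>x\<in>V. P (P x) = P x) \<and>
     (\<forall>x\<in>V. \<forall>y\<in>V. cinner (P x) y = cinner x (P y))"

definition unitary_on :: "'a::complex_inner set \<Rightarrow> ('a \<Rightarrow> 'a) \<Rightarrow> bool" where
  "unitary_on V U \<longleftrightarrow> bounded_op_on V U \<and> U ` V = V \<and>
     (\<forall>x\<in>V. \<forall>y\<in>V. cinner (U x) (U y) = cinner x y)"

definition unitarily_swappable :: "'a::complex_inner set \<Rightarrow> ('a \<Rightarrow> 'a) \<Rightarrow> ('a \<Rightarrow> 'a) \<Rightarrow> bool" where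
  "unitarily_swappable V P Q \<longleftrightarrow>
     (\<exists>U Ui. unitary_on V U \<and>
        (\<forall>x\<in>V. Ui x \<in> V \<and> U (Ui x) = x \<and> Ui (U x) = x) \<and>
        (\<forall>x\<in>V. U (P (Ui x)) = Q x) \<and>
        (\<forall>x\<in>V. U (Q (Ui x)) = P x))"

definition Kset :: "'a::complex_inner set \<Rightarrow> ('a \<Rightarrow> 'a) \<Rightarrow> ('a \<Rightarrow> 'a) \<Rightarrow> 'a set" where
  "Kset V R S = R ` V \<inter> {x\<in>V. S x = 0}"

definition one_minus :: "('a::complex_inner \<Rightarrow> 'a) \<Rightarrow> 'a \<Rightarrow> 'a" where
  "one_minus R = (\<lambda>x. x - R x)"

definition cspan :: "'a::complex_inner set \<Rightarrow> 'a set" where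
  "cspan B = {\<Sum>x\<in>F. c x *\<^sub>C x | F c. finite F \<and> F \<subseteq> B}"

definition orthonormal_basis_of :: "'a::complex_inner set \<Rightarrow> 'a set \<Rightarrow> bool" where
  "orthonormal_basis_of M B \<longleftrightarrow> B \<subseteq> M \<and>
     (\<forall>x\<in>B. cinner x x = 1) \<and> (\<forall>x\<in>B. \<forall>y\<in>B. x \<noteq> y \<longrightarrow> cinner x y = 0) \<and>
     closure (cspan B) = M"

definition same_hilbert_dim :: "'a::complex_inner set \<Rightarrow> 'a set \<Rightarrow> bool" where
  "same_hilbert_dim M N \<longleftrightarrow>
     (\<exists>B C. orthonormal_basis_of M B \<and> orthonormal_basis_of N C \<and> (\<exists>f. bij_betw f B C))"

end

theory Submission
  imports Defs
begin

text \<open>Let \<open>K\<^sub>1 = ran P \<inter> ker Q\<close> and \<open>K\<^sub>2 = ker P \<inter> ran Q\<close>. These are orthogonal closed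
subspaces, and on \<open>H\<^sub>0 = (K\<^sub>1 \<union> K\<^sub>2)\<^sup>\<bottom>\<close> both projections restrict to orthogonal projections
whose two \<open>K\<close>-spaces are trivial. A unitary \<open>U\<close> with \<open>U P U\<^sup>-\<^sup>1 = Q\<close> and \<open>U Q U\<^sup>-\<^sup>1 = P\<close>
maps \<open>K\<^sub>1\<close> onto \<open>K\<^sub>2\<close>, so it carries an orthonormal basis of \<open>K\<^sub>1\<close> to one of \<open>K\<^sub>2\<close>.
Conversely, a bijection between orthonormal bases yields a unitary \<open>T : K\<^sub>1 \<rightarrow> K\<^sub>2\<close>;
combined with \<open>T\<^sup>-\<^sup>1\<close> on \<open>K\<^sub>2\<close> and the unitary given by the hypothesis on the separable
space \<open>H\<^sub>0\<close>, it yields the required unitary on \<open>H = K\<^sub>1 \<oplus> K\<^sub>2 \<oplus> H\<^sub>0\<close>.\<close>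

lemma scaleC_zero_right [simp]: "a *\<^sub>C (0::'a::complex_inner) = 0"
  using scaleC_add_right[of a "0::'a" 0] by simp

lemma scaleC_zero_left [simp]: "0 *\<^sub>C (x::'a::complex_inner) = 0"
  using scaleC_add_left[of 0 0 x] by simp

lemma scaleC_minus_left: "(- a) *\<^sub>C (x::'a::complex_inner) = - (a *\<^sub>C x)"
  using scaleC_add_left[of a "-a" x] by (simp add: eq_neg_iff_add_eq_0 add.commute)

lemma minus_eq_scaleC: "- (x::'a::complex_inner) = (-1) *\<^sub>C x"
  by (simp add: scaleC_minus_left scaleC_one)

lemma cinner_zero_right [simp]: "cinner x (0::'a::complex_inner) = 0"
  using cinner_add_right[of x "0::'a" 0] by simp

lemma cinner_zero_left [simp]: "cinner (0::'a::complex_inner) x = 0"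
  by (subst cinner_commute) simp

lemma cinner_add_left: "cinner (x + y::'a::complex_inner) z = cinner x z + cinner y z"
  by (subst (1 2 3) cinner_commute) (simp add: cinner_add_right)

lemma cinner_scaleC_left: "cinner (a *\<^sub>C x::'a::complex_inner) y = cnj a * cinner x y"
  by (subst (1 2) cinner_commute) (simp add: cinner_scaleC_right)

lemma cinner_minus_right: "cinner x (- y::'a::complex_inner) = - cinner x y"
  using cinner_add_right[of x y "-y"] by (simp add: eq_neg_iff_add_eq_0 add.commute)

lemma cinner_minus_left: "cinner (- x::'a::complex_inner) y = - cinner x y"
  using cinner_add_left[of x "-x" y] by (simp add: eq_neg_iff_add_eq_0 add.commute)

lemma cinner_diff_right: "cinner x (y - z::'a::complex_inner) = cinner x y - cinner x z"
  using cinner_add_right[of x y "-z"] by (simp add: cinner_minus_right)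

lemma cinner_diff_left: "cinner (x - y::'a::complex_inner) z = cinner x z - cinner y z"
  using cinner_add_left[of x "-y" z] by (simp add: cinner_minus_left)

lemma cinner_scaleR_left: "cinner (r *\<^sub>R x::'a::complex_inner) y = r *\<^sub>R cinner x y"
  by (simp add: scaleR_scaleC cinner_scaleC_left scaleR_conv_of_real)

lemma cinner_scaleR_right: "cinner x (r *\<^sub>R y::'a::complex_inner) = r *\<^sub>R cinner x y"
  by (simp add: scaleR_scaleC cinner_scaleC_right scaleR_conv_of_real)

lemma cinner_sum_right: "cinner x (\<Sum>i\<in>F. f i) = (\<Sum>i\<in>F. cinner (x::'a::complex_inner) (f i))"
  by (induction F rule: infinite_finite_induct) (auto simp: cinner_add_right)

lemma cinner_sum_left: "cinner (\<Sum>i\<in>F. f i) x = (\<Sum>i\<in>F. cinner (f i) (x::'a::complex_inner))"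
  by (induction F rule: infinite_finite_induct) (auto simp: cinner_add_left)

lemma cinner_eq_0_sym: "cinner x y = 0 \<Longrightarrow> cinner y (x::'a::complex_inner) = 0"
  by (subst cinner_commute) simp

lemma cinner_self_eq_power2_norm: "cinner x x = complex_of_real ((norm (x::'a::complex_inner))\<^sup>2)"
proof -
  have "(norm x)\<^sup>2 = Re (cinner x x)"
    using norm_eq_sqrt_cinner[of x] cinner_self_nonneg[of x] by simp
  then show ?thesis using cinner_self_real[of x] by (simp add: complex_eq_iff)
qed

lemma power2_norm_eq_cinner: "(norm (x::'a::complex_inner))\<^sup>2 = Re (cinner x x)"
  by (simp add: cinner_self_eq_power2_norm)

lemma norm_scaleC: "norm (a *\<^sub>C (x::'a::complex_inner)) = cmod a * norm x"
proof -
  have "cinner (a *\<^sub>C x) (a *\<^sub>C x) = (a * cnj a) * cinner x x"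
    by (simp add: cinner_scaleC_left cinner_scaleC_right algebra_simps)
  also have "\<dots> = complex_of_real ((cmod a)\<^sup>2 * (norm x)\<^sup>2)"
    by (simp add: complex_norm_square[symmetric] cinner_self_eq_power2_norm)
  finally have "(norm (a *\<^sub>C x))\<^sup>2 = (cmod a * norm x)\<^sup>2"
    by (simp only: power2_norm_eq_cinner Re_complex_of_real power_mult_distrib)
  then show ?thesis by (simp add: power2_eq_iff_nonneg)
qed

lemma power2_norm_add: "(norm (x + y::'a::complex_inner))\<^sup>2 = (norm x)\<^sup>2 + (norm y)\<^sup>2 + 2 * Re (cinner x y)"
proof -
  have "Re (cinner y x) = Re (cinner x y)" by (subst cinner_commute) simp
  then show ?thesis unfolding power2_norm_eq_cinner by (simp add: cinner_add_left cinner_add_right)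
qed

lemma power2_norm_diff: "(norm (x - y::'a::complex_inner))\<^sup>2 = (norm x)\<^sup>2 + (norm y)\<^sup>2 - 2 * Re (cinner x y)"
proof -
  have "Re (cinner y x) = Re (cinner x y)" by (subst cinner_commute) simp
  then show ?thesis unfolding power2_norm_eq_cinner by (simp add: cinner_diff_left cinner_diff_right)
qed

lemma cinner_Cauchy_Schwarz: "cmod (cinner x y) \<le> norm (x::'a::complex_inner) * norm y"
proof (cases "y = 0")
  case True then show ?thesis by simp
next
  case False
  define n where "n = (norm y)\<^sup>2"
  have n: "n > 0" using False by (simp add: n_def)
  define t where "t = - cinner y x / complex_of_real n"
  have "0 \<le> (norm (x + t *\<^sub>C y))\<^sup>2" by simp
  also have "\<dots> = (norm x)\<^sup>2 + (cmod t)\<^sup>2 * n + 2 * Re (t * cinner x y)"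
    by (simp add: power2_norm_add norm_scaleC power_mult_distrib n_def cinner_scaleC_right)
  also have "t * cinner x y = - complex_of_real ((cmod (cinner x y))\<^sup>2 / n)"
  proof -
    have "cinner y x * cinner x y = complex_of_real ((cmod (cinner x y))\<^sup>2)"
      by (subst cinner_commute[of y x]) (metis complex_norm_square mult.commute)
    then show ?thesis using n by (simp add: t_def)
  qed
  also have "(cmod t)\<^sup>2 = (cmod (cinner x y))\<^sup>2 / n\<^sup>2"
  proof -
    have "cmod (cinner y x) = cmod (cinner x y)" by (subst cinner_commute) simp
    then show ?thesis using n by (simp add: t_def norm_divide power_divide)
  qed
  finally have "0 \<le> (norm x)\<^sup>2 - (cmod (cinner x y))\<^sup>2 / n"
    using n by (simp add: power2_eq_square)
  then have "(cmod (cinner x y))\<^sup>2 \<le> (norm x * norm y)\<^sup>2"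
    using n by (simp add: field_simps n_def power_mult_distrib)
  then show ?thesis by (simp add: power2_le_iff_abs_le)
qed

lemma bounded_bilinear_cinner: "bounded_bilinear (cinner :: 'a::complex_inner \<Rightarrow> 'a \<Rightarrow> complex)"
proof
  show "\<exists>K. \<forall>a b. norm (cinner a b) \<le> norm (a::'a) * norm b * K"
    by (rule exI[of _ 1]) (simp add: cinner_Cauchy_Schwarz)
qed (simp_all add: cinner_add_left cinner_add_right cinner_scaleR_left cinner_scaleR_right)

lemmas tendsto_cinner = bounded_bilinear.tendsto[OF bounded_bilinear_cinner]
lemmas continuous_on_cinner = bounded_bilinear.continuous_on[OF bounded_bilinear_cinner]

lemma bounded_linear_scaleC: "bounded_linear (\<lambda>x::'a::complex_inner. a *\<^sub>C x)"
proof (rule bounded_linear_intro[where K="cmod a"])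
  show "a *\<^sub>C (r *\<^sub>R x) = r *\<^sub>R (a *\<^sub>C x)" for r and x :: 'a
    by (simp add: scaleR_scaleC scaleC_scaleC mult.commute)
qed (simp_all add: scaleC_add_right norm_scaleC)

lemmas tendsto_scaleC = bounded_linear.tendsto[OF bounded_linear_scaleC]

section \<open>Closed subspaces and orthogonal projections\<close>

lemma csubspace_0: "csubspace V \<Longrightarrow> 0 \<in> V"
  by (simp add: csubspace_def)

lemma csubspace_add: "csubspace V \<Longrightarrow> x \<in> V \<Longrightarrow> y \<in> V \<Longrightarrow> x + y \<in> V"
  by (simp add: csubspace_def)

lemma csubspace_scaleC: "csubspace V \<Longrightarrow> x \<in> V \<Longrightarrow> a *\<^sub>C x \<in> V"
  by (simp add: csubspace_def)

lemma csubspace_diff: "csubspace V \<Longrightarrow> x \<in> V \<Longrightarrow> y \<in> V \<Longrightarrow> x - y \<in> V"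
  using csubspace_add[of V x "(-1) *\<^sub>C y"] csubspace_scaleC[of V y "-1"]
  by (simp add: minus_eq_scaleC[symmetric])

lemma csubspace_scaleR: "csubspace V \<Longrightarrow> x \<in> V \<Longrightarrow> r *\<^sub>R x \<in> V"
  by (simp add: scaleR_scaleC csubspace_scaleC)

lemma csubspace_sum: "csubspace V \<Longrightarrow> (\<And>i. i \<in> F \<Longrightarrow> f i \<in> V) \<Longrightarrow> sum f F \<in> V"
  by (induction F rule: infinite_finite_induct) (auto simp: csubspace_0 csubspace_add)

lemma csubspace_UNIV: "csubspace UNIV"
  by (simp add: csubspace_def)

lemma closed_csubspace_closure:
  assumes S: "csubspace (S::'a::complex_inner set)"
  shows "closed_csubspace (closure S)"
proof -
  have "x + y \<in> closure S" if xy: "x \<in> closure S" "y \<in> closure S" for x y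
  proof -
    obtain u v where "\<forall>n. u n \<in> S" "u \<longlonglongrightarrow> x" "\<forall>n. v n \<in> S" "v \<longlonglongrightarrow> y"
      using xy unfolding closure_sequential by blast
    then show ?thesis unfolding closure_sequential
      by (intro exI[of _ "\<lambda>n. u n + v n"]) (auto intro: tendsto_add csubspace_add[OF S])
  qed
  moreover have "a *\<^sub>C x \<in> closure S" if x: "x \<in> closure S" for x a
  proof -
    obtain u where "\<forall>n. u n \<in> S" "u \<longlonglongrightarrow> x" using x unfolding closure_sequential by blast
    then show ?thesis unfolding closure_sequential
      by (intro exI[of _ "\<lambda>n. a *\<^sub>C u n"]) (auto intro: tendsto_scaleC csubspace_scaleC[OF S])
  qed
  moreover have "0 \<in> closure S" using S csubspace_0 closure_subset by blast
  ultimately show ?thesis by (simp add: closed_csubspace_def csubspace_def)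
qed

definition orth_compl :: "'a::complex_inner set \<Rightarrow> 'a set" where
  "orth_compl M = {x. \<forall>m\<in>M. cinner m x = 0}"

lemma closed_csubspace_orth_compl: "closed_csubspace (orth_compl M)"
proof -
  have "orth_compl M = (\<Inter>m\<in>M. {x. cinner m x = 0})" by (auto simp: orth_compl_def)
  moreover have "closed {x. cinner m x = 0}" for m :: 'a
    by (intro closed_Collect_eq continuous_on_cinner continuous_intros)
  ultimately have "closed (orth_compl M)" by auto
  moreover have "csubspace (orth_compl M)"
    by (auto simp: csubspace_def orth_compl_def cinner_add_right cinner_scaleC_right)
  ultimately show ?thesis by (simp add: closed_csubspace_def)
qed

lemma dist_eq_if_cinner_preserving:
  assumes "cinner (g x) (g x) = cinner x x" "cinner (g y) (g y) = cinner y y"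
    and "cinner (g x) (g y) = cinner x y"
  shows "dist (g x) (g y) = dist x (y::'a::complex_inner)"
proof -
  have "(norm (g x - g y))\<^sup>2 = (norm (x - y))\<^sup>2"
    unfolding power2_norm_diff by (simp only: power2_norm_eq_cinner assms)
  then show ?thesis by (simp add: dist_norm power2_eq_iff_nonneg)
qed

lemma inj_if_cinner_preserving:
  fixes U :: "'a::complex_inner \<Rightarrow> 'a"
  assumes "\<And>x y. cinner (U x) (U y) = cinner x y"
  shows "inj U"
  by (rule injI) (metis assms dist_eq_0_iff dist_eq_if_cinner_preserving)

text \<open>The defect of additivity (or homogeneity) has vanishing inner square.\<close>

lemma
  fixes g :: "'a::complex_inner \<Rightarrow> 'a"
  assumes D: "csubspace D"
    and g: "\<And>u v. u \<in> D \<Longrightarrow> v \<in> D \<Longrightarrow> cinner (g u) (g v) = cinner u v"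
    and x: "x \<in> D" and y: "y \<in> D"
  shows cinner_preserving_add: "g (x + y) = g x + g y"
    and cinner_preserving_scaleC: "g (a *\<^sub>C x) = a *\<^sub>C g x"
proof -
  have xy: "x + y \<in> D" and ax: "a *\<^sub>C x \<in> D" using D x y by (auto intro: csubspace_add csubspace_scaleC)
  define w where "w = g (x + y) - g x - g y"
  have "cinner w w = 0"
    unfolding w_def
    by (simp add: cinner_diff_left cinner_diff_right g x y xy cinner_add_left cinner_add_right)
  then show "g (x + y) = g x + g y" unfolding w_def cinner_self_eq_0 by (simp add: algebra_simps)
  define w' where "w' = g (a *\<^sub>C x) - a *\<^sub>C g x"
  have "cinner w' w' = 0"
    unfolding w'_def
    by (simp add: cinner_diff_left cinner_diff_right g x ax cinner_scaleC_left cinner_scaleC_right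
        algebra_simps)
  then show "g (a *\<^sub>C x) = a *\<^sub>C g x" unfolding w'_def cinner_self_eq_0 by simp
qed

lemma cinner_preserving_zero:
  fixes g :: "'a::complex_inner \<Rightarrow> 'a"
  assumes "csubspace D" "\<And>u v. u \<in> D \<Longrightarrow> v \<in> D \<Longrightarrow> cinner (g u) (g v) = cinner u v"
  shows "g 0 = 0"
  using cinner_preserving_scaleC[OF assms csubspace_0 csubspace_0, of 0] assms(1) by simp

lemma csubspace_image_cinner_preserving:
  fixes g :: "'a::complex_inner \<Rightarrow> 'a"
  assumes D: "csubspace D" and g: "\<And>u v. u \<in> D \<Longrightarrow> v \<in> D \<Longrightarrow> cinner (g u) (g v) = cinner u v"
  shows "csubspace (g ` D)"
  unfolding csubspace_def
proof (intro conjI ballI allI)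
  show "0 \<in> g ` D" using cinner_preserving_zero[OF D g] csubspace_0[OF D] by force
  show "x + y \<in> g ` D" if xy: "x \<in> g ` D" "y \<in> g ` D" for x y
  proof -
    obtain u v where "u \<in> D" "v \<in> D" "x = g u" "y = g v" using xy by blast
    then show ?thesis
      using cinner_preserving_add[OF D g] csubspace_add[OF D] by (metis image_eqI)
  qed
  show "a *\<^sub>C x \<in> g ` D" if x: "x \<in> g ` D" for a x
  proof -
    obtain u where "u \<in> D" "x = g u" using x by blast
    then show ?thesis
      using cinner_preserving_scaleC[OF D g] csubspace_scaleC[OF D] by (metis image_eqI)
  qed
qed

lemma unitary_on_UNIV_if_cinner_preserving:
  fixes U :: "'a::complex_inner \<Rightarrow> 'a"
  assumes U: "\<And>x y. cinner (U x) (U y) = cinner x y" and "surj U"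
  shows "unitary_on UNIV U"
proof -
  have "norm (U x) = norm x" for x using U[of x x] by (simp add: norm_eq_sqrt_cinner)
  then show ?thesis
    using assms cinner_preserving_add[OF csubspace_UNIV U] cinner_preserving_scaleC[OF csubspace_UNIV U]
    by (auto simp: unitary_on_def bounded_op_on_def intro: exI[of _ 1])
qed

lemma bounded_op_on_UNIV_linear:
  assumes "bounded_op_on (UNIV::'a::complex_inner set) T"
  shows "bounded_linear T" "T (x + y) = T x + T y" "T (a *\<^sub>C x) = a *\<^sub>C T x" "T 0 = 0"
proof -
  have add: "\<And>x y. T (x + y) = T x + T y" and sc: "\<And>a x. T (a *\<^sub>C x) = a *\<^sub>C T x"
    using assms by (auto simp: bounded_op_on_def)
  obtain K where K: "\<And>x. norm (T x) \<le> K * norm x" using assms by (auto simp: bounded_op_on_def)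
  show "bounded_linear T"
    by (rule bounded_linear_intro[where K=K]) (simp_all add: add scaleR_scaleC sc K mult.commute)
  show "T (x + y) = T x + T y" "T (a *\<^sub>C x) = a *\<^sub>C T x" by (rule add, rule sc)
  show "T 0 = 0" using sc[of 0 0] by simp
qed

lemma closed_isometric_image:
  fixes h :: "'a::complete_space \<Rightarrow> 'b::metric_space"
  assumes K: "closed K" and h: "\<And>x y. x \<in> K \<Longrightarrow> y \<in> K \<Longrightarrow> dist (h x) (h y) = dist x y"
  shows "closed (h ` K)"
proof -
  have hc: "continuous_on K h"
    by (rule lipschitz_on_continuous_on[of 1]) (simp add: lipschitz_onI h)
  have "\<exists>l\<in>h ` K. y \<longlonglongrightarrow> l" if y: "\<forall>n. y n \<in> h ` K" "Cauchy y" for y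
  proof -
    have "\<forall>n. \<exists>u. u \<in> K \<and> y n = h u" using y(1) by blast
    then obtain x where x: "\<And>n. x n \<in> K" "\<And>n. y n = h (x n)" by metis
    have "dist (y m) (y n) = dist (x m) (x n)" for m n using h x by simp
    then have "Cauchy x" using y(2) unfolding Cauchy_def by simp
    then obtain a where a: "x \<longlonglongrightarrow> a" using Cauchy_convergent_iff convergent_def by blast
    have "a \<in> K" using closed_sequentially[OF K _ a] x(1) by blast
    then have "(h \<circ> x) \<longlonglongrightarrow> h a" using hc a x(1) unfolding continuous_on_sequentially by blast
    moreover have "h \<circ> x = y" using x(2) by auto
    ultimately show ?thesis using \<open>a \<in> K\<close> by auto
  qed
  then show ?thesis by (intro complete_imp_closed) (auto simp: complete_def)
qed

subsection \<open>The projection theorem\<close>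

lemma power2_norm_diff_le_infdist:
  fixes x a b :: "'a::complex_inner"
  assumes M: "csubspace M" and a: "a \<in> M" and b: "b \<in> M"
  shows "(norm (a - b))\<^sup>2 \<le> 2 * (dist x a)\<^sup>2 + 2 * (dist x b)\<^sup>2 - 4 * (infdist x M)\<^sup>2"
proof -
  define u v where "u = x - a" and "v = x - b"
  have parallelogram: "(norm (u - v))\<^sup>2 + (norm (u + v))\<^sup>2 = 2 * (norm u)\<^sup>2 + 2 * (norm v)\<^sup>2"
    by (simp add: power2_norm_add power2_norm_diff)
  define mid where "mid = (1/2::real) *\<^sub>R (a + b)"
  have "mid \<in> M" unfolding mid_def using M a b by (intro csubspace_scaleR csubspace_add)
  then have "infdist x M \<le> dist x mid" by (rule infdist_le)
  also have "u + v = 2 *\<^sub>R (x - mid)" by (simp add: u_def v_def mid_def algebra_simps scaleR_2)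
  then have "dist x mid = norm (u + v) / 2" by (simp add: dist_norm)
  finally have "(2 * infdist x M)\<^sup>2 \<le> (norm (u + v))\<^sup>2"
    using infdist_nonneg by (intro power_mono) auto
  moreover have "norm (u - v) = norm (a - b)" by (simp add: u_def v_def norm_minus_commute)
  ultimately show ?thesis using parallelogram by (simp add: u_def v_def dist_norm power_mult_distrib)
qed

lemma minimizing_sequence_Cauchy:
  fixes m :: "nat \<Rightarrow> 'a::complex_inner"
  assumes M: "csubspace M" and m_in: "\<And>n. m n \<in> M"
    and m_dist: "\<And>n. dist x (m n) < infdist x M + inverse (real (Suc n))"
  shows "Cauchy m"
proof (rule CauchyI)
  fix e :: real assume e: "e > 0"
  define d where "d = infdist x M"
  have d0: "d \<ge> 0" by (simp add: d_def infdist_nonneg)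
  have "0 < min 1 (e\<^sup>2 / (4 * (2 * d + 1)))" using e d0 by simp
  then obtain N where N: "inverse (real (Suc N)) < min 1 (e\<^sup>2 / (4 * (2 * d + 1)))"
    using reals_Archimedean by blast
  define \<delta> where "\<delta> = inverse (real (Suc N))"
  have "\<delta> < e\<^sup>2 / (4 * (2 * d + 1))" "\<delta> < 1" using N by (simp_all add: \<delta>_def)
  then have \<delta>: "0 < \<delta>" "\<delta> \<le> 1" "\<delta> * (4 * (2 * d + 1)) < e\<^sup>2"
    using d0 by (simp_all add: \<delta>_def pos_less_divide_eq)
  have close: "(dist x (m n))\<^sup>2 \<le> (d + \<delta>)\<^sup>2" if "n \<ge> N" for n
  proof -
    have "inverse (real (Suc n)) \<le> \<delta>" unfolding \<delta>_def using that by (simp add: field_simps)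
    then show ?thesis using m_dist[of n] by (intro power_mono) (auto simp: d_def)
  qed
  show "\<exists>M. \<forall>i\<ge>M. \<forall>j\<ge>M. norm (m i - m j) < e"
  proof (intro exI allI impI)
    fix i j assume "i \<ge> N" "j \<ge> N"
    have "(norm (m i - m j))\<^sup>2 \<le> 2 * (dist x (m i))\<^sup>2 + 2 * (dist x (m j))\<^sup>2 - 4 * d\<^sup>2"
      using power2_norm_diff_le_infdist[OF M m_in m_in] by (simp add: d_def)
    also have "\<dots> \<le> \<delta> * (4 * (2 * d + \<delta>))"
      using close[OF \<open>i \<ge> N\<close>] close[OF \<open>j \<ge> N\<close>] by (simp add: power2_eq_square algebra_simps)
    also have "\<dots> \<le> \<delta> * (4 * (2 * d + 1))" using \<delta> by (intro mult_left_mono) auto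
    also have "\<dots> < e\<^sup>2" by (fact \<delta>(3))
    finally show "norm (m i - m j) < e" using e by (simp add: power_less_imp_less_base)
  qed
qed

lemma infdist_attained:
  fixes x :: "'a::chilbert"
  assumes M: "closed_csubspace M"
  shows "\<exists>p\<in>M. dist x p = infdist x M"
proof -
  have Ms: "csubspace M" and Mc: "closed M" using M by (auto simp: closed_csubspace_def)
  define d where "d = infdist x M"
  have "M \<noteq> {}" using csubspace_0[OF Ms] by blast
  then have "\<exists>a\<in>M. dist x a < d + inverse (real (Suc n))" for n
    using cInf_lessD[of "dist x ` M" "d + inverse (real (Suc n))"]
    by (simp add: d_def infdist_notempty)
  then obtain m where m: "\<And>n. m n \<in> M" "\<And>n. dist x (m n) < d + inverse (real (Suc n))"
    by metis
  then have "Cauchy m" unfolding d_def by (rule minimizing_sequence_Cauchy[OF Ms])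
  then obtain p where p: "m \<longlonglongrightarrow> p" using Cauchy_convergent_iff convergent_def by blast
  have "p \<in> M" using closed_sequentially[OF Mc m(1) p] .
  moreover have "dist x p \<le> d"
  proof (rule LIMSEQ_le)
    show "(\<lambda>n. dist x (m n)) \<longlonglongrightarrow> dist x p" using p by (intro tendsto_intros)
    show "(\<lambda>n. d + inverse (real (Suc n))) \<longlonglongrightarrow> d"
      using tendsto_add[OF tendsto_const LIMSEQ_inverse_real_of_nat, of d] by simp
  qed (use m(2) less_imp_le in blast)
  ultimately show ?thesis using infdist_le[of p M x] by (auto simp: d_def)
qed

text \<open>Otherwise \<open>p + s \<langle>q, x - p\<rangle> q\<close>, with \<open>s = 1 / (\<parallel>q\<parallel>\<^sup>2 + 1)\<close>, would be
nearer to \<open>x\<close>.\<close>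

lemma nearest_point_orthogonal:
  fixes x :: "'a::complex_inner"
  assumes M: "csubspace M" and p: "p \<in> M" and nearest: "\<And>q. q \<in> M \<Longrightarrow> dist x p \<le> dist x q"
    and q: "q \<in> M"
  shows "cinner q (x - p) = 0"
proof -
  define z where "z = x - p"
  define c where "c = cinner q z"
  define s :: real where "s = 1 / ((norm q)\<^sup>2 + 1)"
  have s: "s > 0" "s * (norm q)\<^sup>2 < 1"
    unfolding s_def using zero_le_power2[of "norm q"] by (simp_all add: add_pos_nonneg field_simps)
  define t where "t = complex_of_real s * c"
  have "p + t *\<^sub>C q \<in> M" using M p q by (intro csubspace_add csubspace_scaleC)
  then have "dist x p \<le> dist x (p + t *\<^sub>C q)" by (rule nearest)
  then have "norm z \<le> norm (z - t *\<^sub>C q)" by (simp add: z_def dist_norm algebra_simps)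
  then have "(norm z)\<^sup>2 \<le> (norm (z - t *\<^sub>C q))\<^sup>2" by (simp add: power_mono)
  also have "\<dots> = (norm z)\<^sup>2 + (cmod t)\<^sup>2 * (norm q)\<^sup>2 - 2 * Re (t * cnj c)"
    by (simp add: power2_norm_diff norm_scaleC power_mult_distrib cinner_scaleC_right c_def
        cinner_commute[of z q])
  also have "t * cnj c = complex_of_real (s * (cmod c)\<^sup>2)"
    by (simp add: t_def mult.assoc flip: complex_norm_square)
  also have "(cmod t)\<^sup>2 = s\<^sup>2 * (cmod c)\<^sup>2"
    using s by (simp add: t_def norm_mult power_mult_distrib)
  finally have "0 \<le> s * ((cmod c)\<^sup>2 * (s * (norm q)\<^sup>2 - 2))"
    by (simp add: power2_eq_square algebra_simps)
  then have "(cmod c)\<^sup>2 \<le> 0" using s by (simp add: zero_le_mult_iff)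
  then show ?thesis by (simp add: c_def z_def)
qed

definition proj :: "'a::chilbert set \<Rightarrow> 'a \<Rightarrow> 'a" where
  "proj M x = (SOME p. p \<in> M \<and> (\<forall>m\<in>M. cinner m (x - p) = 0))"

lemma
  assumes M: "closed_csubspace M"
  shows proj_in: "proj M x \<in> M"
    and proj_orthogonal: "m \<in> M \<Longrightarrow> cinner m (x - proj M x) = 0"
proof -
  have Ms: "csubspace M" using M by (simp add: closed_csubspace_def)
  obtain p where p: "p \<in> M" "dist x p = infdist x M" using infdist_attained[OF M] by blast
  have "dist x p \<le> dist x q" if "q \<in> M" for q using p(2) infdist_le[OF that] by simp
  then have "\<exists>p. p \<in> M \<and> (\<forall>m\<in>M. cinner m (x - p) = 0)"
    using nearest_point_orthogonal[OF Ms p(1)] p(1) by blast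
  from someI_ex[OF this] show "proj M x \<in> M" "m \<in> M \<Longrightarrow> cinner m (x - proj M x) = 0"
    unfolding proj_def by auto
qed

lemma proj_unique:
  assumes M: "closed_csubspace M" and p: "p \<in> M" and orth: "\<And>m. m \<in> M \<Longrightarrow> cinner m (x - p) = 0"
  shows "proj M x = p"
proof -
  define d where "d = p - proj M x"
  have "d \<in> M" using M p proj_in by (auto intro: csubspace_diff simp: closed_csubspace_def d_def)
  then have "cinner d (x - proj M x) = 0" "cinner d (x - p) = 0"
    using proj_orthogonal[OF M] orth by blast+
  moreover have "d = (x - proj M x) - (x - p)" by (simp add: d_def)
  ultimately have "cinner d d = 0" by (metis cinner_diff_right diff_self)
  then show ?thesis by (simp add: cinner_self_eq_0 d_def)
qed

section \<open>Orthonormal bases\<close>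

definition orthonormal :: "'a::complex_inner set \<Rightarrow> bool" where
  "orthonormal S \<longleftrightarrow> (\<forall>x\<in>S. cinner x x = 1) \<and> (\<forall>x\<in>S. \<forall>y\<in>S. x \<noteq> y \<longrightarrow> cinner x y = 0)"

lemma orthonormal_basis_of_orthonormal: "orthonormal_basis_of M B \<Longrightarrow> orthonormal B"
  by (simp add: orthonormal_basis_of_def orthonormal_def)

lemma orthonormal_cinner: "orthonormal B \<Longrightarrow> b \<in> B \<Longrightarrow> v \<in> B \<Longrightarrow> cinner b v = (if b = v then 1 else 0)"
  by (auto simp: orthonormal_def)

lemma orthonormal_Union_chain:
  assumes C: "C \<in> chains A" and on: "\<And>S. S \<in> C \<Longrightarrow> orthonormal S"
  shows "orthonormal (\<Union>C)"
  unfolding orthonormal_def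
proof (intro conjI ballI impI)
  show "cinner x x = 1" if "x \<in> \<Union>C" for x using that on by (auto simp: orthonormal_def)
  fix x y assume "x \<in> \<Union>C" "y \<in> \<Union>C" "x \<noteq> y"
  then obtain X Y where "X \<in> C" "x \<in> X" "Y \<in> C" "y \<in> Y" by blast
  moreover have "X \<subseteq> Y \<or> Y \<subseteq> X" using chainsD[OF C \<open>X \<in> C\<close> \<open>Y \<in> C\<close>] .
  ultimately show "cinner x y = 0" using on \<open>x \<noteq> y\<close> unfolding orthonormal_def by blast
qed

lemma cspanI: "finite F \<Longrightarrow> F \<subseteq> B \<Longrightarrow> x = (\<Sum>v\<in>F. c v *\<^sub>C v) \<Longrightarrow> x \<in> cspan B"
  unfolding cspan_def by blast

lemma cspanE:
  assumes "x \<in> cspan B"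
  obtains F c where "finite F" "F \<subseteq> B" "x = (\<Sum>v\<in>F. c v *\<^sub>C v)"
  using assms unfolding cspan_def by blast

lemma cspan_superset: "x \<in> B \<Longrightarrow> x \<in> cspan B"
  by (rule cspanI[of "{x}" B x "\<lambda>_. 1"]) (auto simp: scaleC_one)

lemma csubspace_cspan: "csubspace (cspan B)"
  unfolding csubspace_def
proof (intro conjI ballI allI)
  show "0 \<in> cspan B" by (rule cspanI[of "{}"]) auto
  show "x + y \<in> cspan B" if "x \<in> cspan B" "y \<in> cspan B" for x y
  proof -
    obtain F c where F: "finite F" "F \<subseteq> B" "x = (\<Sum>v\<in>F. c v *\<^sub>C v)"
      using \<open>x \<in> cspan B\<close> by (rule cspanE)
    obtain G d where G: "finite G" "G \<subseteq> B" "y = (\<Sum>v\<in>G. d v *\<^sub>C v)"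
      using \<open>y \<in> cspan B\<close> by (rule cspanE)
    define c' d' where "c' v = (if v \<in> F then c v else 0)" and "d' v = (if v \<in> G then d v else 0)" for v
    have "x = (\<Sum>v\<in>F \<union> G. c' v *\<^sub>C v)" "y = (\<Sum>v\<in>F \<union> G. d' v *\<^sub>C v)"
      unfolding F(3) G(3) c'_def d'_def using F(1) G(1)
      by (auto intro!: sum.mono_neutral_cong_left)
    then have "x + y = (\<Sum>v\<in>F \<union> G. (c' v + d' v) *\<^sub>C v)"
      by (simp add: scaleC_add_left sum.distrib)
    then show ?thesis using F G by (intro cspanI[of "F \<union> G"]) auto
  qed
  show "a *\<^sub>C x \<in> cspan B" if "x \<in> cspan B" for a x
  proof -
    obtain F c where F: "finite F" "F \<subseteq> B" "x = (\<Sum>v\<in>F. c v *\<^sub>C v)"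
      using \<open>x \<in> cspan B\<close> by (rule cspanE)
    have "a *\<^sub>C x = (\<Sum>v\<in>F. (a * c v) *\<^sub>C v)"
      unfolding F(3) by (induction F rule: infinite_finite_induct) (auto simp: scaleC_add_right scaleC_scaleC)
    then show ?thesis using F by (intro cspanI) auto
  qed
qed

lemma cspan_minimal: "B \<subseteq> M \<Longrightarrow> csubspace M \<Longrightarrow> cspan B \<subseteq> M"
  by (auto elim!: cspanE intro!: csubspace_sum csubspace_scaleC)

lemma cinner_orthonormal_sum:
  assumes F: "finite F" and h: "\<And>v w. v \<in> F \<Longrightarrow> w \<in> F \<Longrightarrow> cinner (h v) (h w) = (if v = w then 1 else 0)"
    and b: "b \<in> F"
  shows "cinner (h b) (\<Sum>v\<in>F. c v *\<^sub>C h v) = c b"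
proof -
  have "cinner (h b) (\<Sum>v\<in>F. c v *\<^sub>C h v) = (\<Sum>v\<in>F. if b = v then c v else 0)"
    unfolding cinner_sum_right cinner_scaleC_right by (rule sum.cong) (auto simp: h b)
  also have "\<dots> = c b" using F b by simp
  finally show ?thesis .
qed

lemma cinner_orthonormal_sums:
  assumes F: "finite F" and h: "\<And>v w. v \<in> F \<Longrightarrow> w \<in> F \<Longrightarrow> cinner (h v) (h w) = (if v = w then 1 else 0)"
  shows "cinner (\<Sum>v\<in>F. a v *\<^sub>C h v) (\<Sum>v\<in>F. c v *\<^sub>C h v) = (\<Sum>v\<in>F. cnj (a v) * c v)"
  unfolding cinner_sum_left cinner_scaleC_left
  by (rule sum.cong) (auto simp: cinner_orthonormal_sum[OF F h])

definition coeff_supp :: "'a::complex_inner set \<Rightarrow> 'a \<Rightarrow> 'a set" where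
  "coeff_supp B x = {b\<in>B. cinner b x \<noteq> 0}"

lemma cspan_orthonormal_expansion:
  assumes B: "orthonormal B" and x: "x \<in> cspan B"
  shows "finite (coeff_supp B x)"
    and "\<And>G. finite G \<Longrightarrow> coeff_supp B x \<subseteq> G \<Longrightarrow> G \<subseteq> B \<Longrightarrow> x = (\<Sum>b\<in>G. cinner b x *\<^sub>C b)"
proof -
  obtain F c where F: "finite F" "F \<subseteq> B" "x = (\<Sum>v\<in>F. c v *\<^sub>C v)" using x by (rule cspanE)
  have on: "\<And>v w. v \<in> F \<Longrightarrow> w \<in> F \<Longrightarrow> cinner (id v) (id w) = (if v = w then 1 else 0)"
    using F(2) B by (auto simp: orthonormal_def)
  have in_F: "cinner b x = c b" if "b \<in> F" for b
    using cinner_orthonormal_sum[OF F(1) on that, of c] F(3) by simp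
  have outside_F: "cinner b x = 0" if "b \<in> B" "b \<notin> F" for b
  proof -
    have "cinner b v = 0" if "v \<in> F" for v
      using orthonormal_cinner[OF B \<open>b \<in> B\<close>] F(2) \<open>b \<notin> F\<close> that by auto
    then show ?thesis unfolding F(3) cinner_sum_right cinner_scaleC_right by simp
  qed
  have supp: "coeff_supp B x \<subseteq> F" using outside_F by (auto simp: coeff_supp_def)
  then show "finite (coeff_supp B x)" using F(1) finite_subset by blast
  fix G assume G: "finite G" "coeff_supp B x \<subseteq> G" "G \<subseteq> B"
  have "x = (\<Sum>v\<in>F. cinner v x *\<^sub>C v)" unfolding F(3) using in_F F(3) by (intro sum.cong) auto
  also have "\<dots> = (\<Sum>v\<in>F \<union> G. cinner v x *\<^sub>C v)"
    using F(1,2) G by (intro sum.mono_neutral_left) (auto simp: outside_F)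
  also have "\<dots> = (\<Sum>v\<in>G. cinner v x *\<^sub>C v)"
    using F(1,2) G by (intro sum.mono_neutral_right) (auto simp: coeff_supp_def)
  finally show "x = (\<Sum>b\<in>G. cinner b x *\<^sub>C b)" .
qed

lemma exists_unit_orth_compl:
  fixes N :: "'a::chilbert set"
  assumes N: "closed_csubspace N" and M: "csubspace M" "N \<subseteq> M" and x: "x \<in> M" "x \<notin> N"
  shows "\<exists>e\<in>M \<inter> orth_compl N. cinner e e = 1"
proof -
  define z where "z = x - proj N x"
  have "z \<noteq> 0" using x(2) proj_in[OF N, of x] by (auto simp: z_def)
  have "z \<in> M" unfolding z_def using M x proj_in[OF N] by (auto intro: csubspace_diff)
  define e where "e = complex_of_real (1 / norm z) *\<^sub>C z"
  have "e \<in> M" unfolding e_def using M \<open>z \<in> M\<close> by (auto intro: csubspace_scaleC)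
  moreover have "e \<in> orth_compl N"
    using proj_orthogonal[OF N] by (simp add: orth_compl_def e_def z_def cinner_scaleC_right)
  moreover have "cinner e e = 1"
    using \<open>z \<noteq> 0\<close> by (simp add: e_def cinner_self_eq_power2_norm norm_scaleC norm_divide)
  ultimately show ?thesis by blast
qed

lemma orthonormal_basis_exists:
  fixes M :: "'a::chilbert set"
  assumes M: "closed_csubspace M"
  shows "\<exists>B. orthonormal_basis_of M B"
proof -
  have Ms: "csubspace M" and Mc: "closed M" using M by (auto simp: closed_csubspace_def)
  define A where "A = {S. S \<subseteq> M \<and> orthonormal S}"
  have "\<Union>C \<in> A" if "C \<in> chains A" for C
    using orthonormal_Union_chain[OF that] chainsD2[OF that] by (auto simp: A_def)
  then obtain S where S: "S \<subseteq> M" "orthonormal S" and max: "\<And>X. X \<in> A \<Longrightarrow> S \<subseteq> X \<Longrightarrow> X = S"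
    using Zorn_Lemma[of A] by (auto simp: A_def)
  define N where "N = closure (cspan S)"
  have N: "closed_csubspace N" unfolding N_def by (rule closed_csubspace_closure[OF csubspace_cspan])
  have NM: "N \<subseteq> M" unfolding N_def using cspan_minimal[OF S(1) Ms] Mc by (rule closure_minimal)
  have "M \<subseteq> N"
  proof (rule ccontr)
    assume "\<not> M \<subseteq> N"
    then obtain e where e: "e \<in> M" "e \<in> orth_compl N" "cinner e e = 1"
      using exists_unit_orth_compl[OF N Ms NM] by blast
    have SN: "S \<subseteq> N" unfolding N_def using cspan_superset closure_subset by blast
    then have orth: "cinner s e = 0" "cinner e s = 0" if "s \<in> S" for s
      using e(2) that cinner_eq_0_sym by (auto simp: orth_compl_def)
    then have "insert e S \<in> A" "e \<notin> S"
      using e(1,3) S by (auto simp: A_def orthonormal_def)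
    then show False using max by blast
  qed
  then have "orthonormal_basis_of M S" using NM S by (simp add: orthonormal_basis_of_def orthonormal_def N_def)
  then show ?thesis by blast
qed

definition basis_transfer :: "'a::complex_inner set \<Rightarrow> ('a \<Rightarrow> 'a) \<Rightarrow> 'a \<Rightarrow> 'a" where
  "basis_transfer B f x = (\<Sum>b\<in>coeff_supp B x. cinner b x *\<^sub>C f b)"

lemma basis_transfer_eq_sum:
  assumes "finite G" "coeff_supp B x \<subseteq> G" "G \<subseteq> B"
  shows "basis_transfer B f x = (\<Sum>b\<in>G. cinner b x *\<^sub>C f b)"
  unfolding basis_transfer_def using assms by (intro sum.mono_neutral_left) (auto simp: coeff_supp_def)

lemma basis_transfer_basis:
  assumes "orthonormal B" "b \<in> B"
  shows "basis_transfer B f b = f b"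
proof -
  have "coeff_supp B b = {b}" using assms by (auto simp: coeff_supp_def orthonormal_def)
  then show ?thesis using assms by (simp add: basis_transfer_def orthonormal_def scaleC_one)
qed

lemma basis_transfer_in:
  "csubspace N \<Longrightarrow> (\<And>b. b \<in> B \<Longrightarrow> f b \<in> N) \<Longrightarrow> basis_transfer B f x \<in> N"
  unfolding basis_transfer_def by (intro csubspace_sum csubspace_scaleC) (auto simp: coeff_supp_def)

lemma basis_transfer_cinner:
  assumes B: "orthonormal B" and C: "orthonormal C" and f: "bij_betw f B C"
    and x: "x \<in> cspan B" and y: "y \<in> cspan B"
  shows "cinner (basis_transfer B f x) (basis_transfer B f y) = cinner x y"
proof -
  define G where "G = coeff_supp B x \<union> coeff_supp B y"
  have G: "finite G" "coeff_supp B x \<subseteq> G" "coeff_supp B y \<subseteq> G" "G \<subseteq> B"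
    using cspan_orthonormal_expansion(1)[OF B x] cspan_orthonormal_expansion(1)[OF B y]
    by (auto simp: G_def coeff_supp_def)
  have on_f: "cinner (f v) (f w) = (if v = w then 1 else 0)" if "v \<in> G" "w \<in> G" for v w
  proof -
    have vw: "v \<in> B" "w \<in> B" using that G(4) by auto
    then have "f v = f w \<longleftrightarrow> v = w" using inj_on_eq_iff[OF bij_betw_imp_inj_on[OF f]] by blast
    then show ?thesis using orthonormal_cinner[OF C] bij_betwE[OF f] vw by simp
  qed
  have on_id: "cinner (id v) (id w) = (if v = w then 1 else 0)" if "v \<in> G" "w \<in> G" for v w
    using orthonormal_cinner[OF B subsetD[OF G(4) that(1)] subsetD[OF G(4) that(2)]] by simp
  have "cinner (basis_transfer B f x) (basis_transfer B f y) = (\<Sum>b\<in>G. cnj (cinner b x) * cinner b y)"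
    unfolding basis_transfer_eq_sum[OF G(1,2,4)] basis_transfer_eq_sum[OF G(1,3,4)]
    by (rule cinner_orthonormal_sums[OF G(1) on_f])
  also have "\<dots> = cinner (\<Sum>b\<in>G. cinner b x *\<^sub>C id b) (\<Sum>b\<in>G. cinner b y *\<^sub>C id b)"
    by (rule cinner_orthonormal_sums[OF G(1) on_id, symmetric])
  also have "\<dots> = cinner x y"
    using cspan_orthonormal_expansion(2)[OF B x G(1,2,4)] cspan_orthonormal_expansion(2)[OF B y G(1,3,4)]
    by simp
  finally show ?thesis .
qed

lemma cinner_preserving_extend_closure:
  fixes g :: "'a::chilbert \<Rightarrow> 'a"
  assumes g: "\<And>u v. u \<in> D \<Longrightarrow> v \<in> D \<Longrightarrow> cinner (g u) (g v) = cinner u v"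
    and E: "closed E" and gE: "\<And>u. u \<in> D \<Longrightarrow> g u \<in> E"
  obtains h where "\<And>x. x \<in> D \<Longrightarrow> h x = g x" "\<And>x. x \<in> closure D \<Longrightarrow> h x \<in> E"
    "\<And>x y. x \<in> closure D \<Longrightarrow> y \<in> closure D \<Longrightarrow> cinner (h x) (h y) = cinner x y"
proof -
  have "1-lipschitz_on D g" by (rule lipschitz_onI) (auto simp: dist_eq_if_cinner_preserving g)
  then obtain h where h: "1-lipschitz_on (closure D) h" "\<forall>x\<in>D. h x = g x"
    using lipschitz_extend_closure by blast
  have lim: "(\<lambda>n. g (u n)) \<longlonglongrightarrow> h x" if u: "\<forall>n. u n \<in> D" "u \<longlonglongrightarrow> x" and x: "x \<in> closure D" for u x
  proof -
    have "(h \<circ> u) \<longlonglongrightarrow> h x"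
      using lipschitz_on_continuous_on[OF h(1)] u x closure_subset
      unfolding continuous_on_sequentially by blast
    moreover have "h \<circ> u = (\<lambda>n. g (u n))" using h(2) u(1) by auto
    ultimately show ?thesis by simp
  qed
  show ?thesis
  proof
    show "h x = g x" if "x \<in> D" for x using h(2) that by blast
    show "h x \<in> E" if x: "x \<in> closure D" for x
    proof -
      obtain u where u: "\<forall>n. u n \<in> D" "u \<longlonglongrightarrow> x" using x unfolding closure_sequential by blast
      show ?thesis using closed_sequentially[OF E _ lim[OF u x]] gE u(1) by blast
    qed
    show "cinner (h x) (h y) = cinner x y" if x: "x \<in> closure D" and y: "y \<in> closure D" for x y
    proof -
      obtain u where u: "\<forall>n. u n \<in> D" "u \<longlonglongrightarrow> x" using x unfolding closure_sequential by blast
      obtain v where v: "\<forall>n. v n \<in> D" "v \<longlonglongrightarrow> y" using y unfolding closure_sequential by blast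
      have "(\<lambda>n. cinner (g (u n)) (g (v n))) \<longlonglongrightarrow> cinner (h x) (h y)"
        by (intro tendsto_cinner lim u v x y)
      moreover have "(\<lambda>n. cinner (g (u n)) (g (v n))) = (\<lambda>n. cinner (u n) (v n))" using u v g by auto
      moreover have "(\<lambda>n. cinner (u n) (v n)) \<longlonglongrightarrow> cinner x y" by (intro tendsto_cinner u v)
      ultimately show ?thesis using LIMSEQ_unique by metis
    qed
  qed
qed

lemma same_hilbert_dim_imp_unitary_equivalent:
  fixes M N :: "'a::chilbert set"
  assumes M: "closed_csubspace M" and N: "closed_csubspace N" and dim: "same_hilbert_dim M N"
  obtains T where "T ` M = N" "\<And>x y. x \<in> M \<Longrightarrow> y \<in> M \<Longrightarrow> cinner (T x) (T y) = cinner x y"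
proof -
  obtain B C f where B: "orthonormal_basis_of M B" and C: "orthonormal_basis_of N C"
    and f: "bij_betw f B C"
    using dim unfolding same_hilbert_dim_def by blast
  have Bo: "orthonormal B" and Co: "orthonormal C" using B C by (auto intro: orthonormal_basis_of_orthonormal)
  have BM: "B \<subseteq> M" and CN: "C \<subseteq> N" and M_eq: "closure (cspan B) = M" and N_eq: "closure (cspan C) = N"
    using B C by (auto simp: orthonormal_basis_of_def)
  have Ns: "csubspace N" and Nc: "closed N" and Ms: "csubspace M" and Mc: "closed M"
    using M N by (auto simp: closed_csubspace_def)
  have in_N: "basis_transfer B f u \<in> N" for u
    using bij_betwE[OF f] CN by (intro basis_transfer_in[OF Ns]) auto
  obtain h where h: "\<And>x. x \<in> cspan B \<Longrightarrow> h x = basis_transfer B f x" "\<And>x. x \<in> M \<Longrightarrow> h x \<in> N"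
    and h_cinner: "\<And>x y. x \<in> M \<Longrightarrow> y \<in> M \<Longrightarrow> cinner (h x) (h y) = cinner x y"
    using cinner_preserving_extend_closure[of "cspan B" "basis_transfer B f" N,
        OF basis_transfer_cinner[OF Bo Co f] Nc in_N]
    unfolding M_eq by blast
  have "closed (h ` M)"
    using closed_isometric_image[OF Mc] dist_eq_if_cinner_preserving h_cinner by blast
  moreover have "csubspace (h ` M)" by (rule csubspace_image_cinner_preserving[OF Ms h_cinner])
  moreover have "C \<subseteq> h ` M"
  proof
    fix c assume "c \<in> C"
    then obtain b where "b \<in> B" "c = f b" using f by (auto simp: bij_betw_def)
    then show "c \<in> h ` M"
      using h(1)[OF cspan_superset] basis_transfer_basis[OF Bo] BM by (metis image_eqI subsetD)
  qed
  ultimately have "N \<subseteq> h ` M" unfolding N_eq[symmetric] by (intro closure_minimal cspan_minimal)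
  then have "h ` M = N" using h(2) by blast
  then show ?thesis using that h_cinner by blast
qed

lemma orthonormal_basis_of_image:
  fixes U :: "'a::complex_inner \<Rightarrow> 'a"
  assumes U: "\<And>x y. cinner (U x) (U y) = cinner x y"
    and N: "closed_csubspace (U ` M)" and B: "orthonormal_basis_of M B"
  shows "orthonormal_basis_of (U ` M) (U ` B)"
proof -
  have BM: "B \<subseteq> M" and M_eq: "closure (cspan B) = M" and Bo: "orthonormal B"
    using B by (auto simp: orthonormal_basis_of_def intro: orthonormal_basis_of_orthonormal)
  have U_lin: "U (x + y) = U x + U y" "U (a *\<^sub>C x) = a *\<^sub>C U x" "U 0 = 0" for x y a
    using cinner_preserving_add[OF csubspace_UNIV U] cinner_preserving_scaleC[OF csubspace_UNIV U]
      cinner_preserving_zero[OF csubspace_UNIV U] by auto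
  have U_cspan: "U x \<in> cspan (U ` B)" if x: "x \<in> cspan B" for x
  proof -
    obtain F c where F: "finite F" "F \<subseteq> B" "x = (\<Sum>v\<in>F. c v *\<^sub>C v)" using x by (rule cspanE)
    have "U x = (\<Sum>v\<in>F. c v *\<^sub>C U v)" unfolding F(3) using F(1)
      by (induction F rule: finite_induct) (auto simp: U_lin)
    also have "\<dots> \<in> cspan (U ` B)"
      using F(2) by (intro csubspace_sum csubspace_scaleC csubspace_cspan cspan_superset) auto
    finally show ?thesis .
  qed
  have "continuous_on UNIV U"
    by (rule lipschitz_on_continuous_on[of 1]) (simp add: lipschitz_onI dist_eq_if_cinner_preserving U)
  then have "U ` M \<subseteq> closure (cspan (U ` B))"
    unfolding M_eq[symmetric] using U_cspan closure_subset
    by (intro image_closure_subset) (auto intro: continuous_on_subset)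
  moreover have "closure (cspan (U ` B)) \<subseteq> U ` M"
    using N BM by (intro closure_minimal cspan_minimal) (auto simp: closed_csubspace_def)
  moreover have "cinner (U a) (U b) = (if U a = U b then 1 else 0)" if "a \<in> B" "b \<in> B" for a b
  proof -
    have "U a = U b \<longleftrightarrow> a = b" using inj_if_cinner_preserving[OF U] by (auto dest: injD)
    then show ?thesis using orthonormal_cinner[OF Bo that] U by simp
  qed
  ultimately show ?thesis using BM unfolding orthonormal_basis_of_def by (auto simp: image_subset_iff)
qed

lemma separable_set_subset:
  fixes S :: "'a::metric_space set"
  assumes "separable_set (UNIV :: 'a set)"
  shows "separable_set S"
proof -
  obtain D :: "'a set" where D: "countable D" "UNIV \<subseteq> closure D"
    using assms unfolding separable_set_def by blast
  define I where "I = {(d, n). d \<in> D \<and> (\<exists>s\<in>S. dist d s < inverse (real (Suc n)))}"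
  define pick where "pick = (\<lambda>(d, n). SOME s. s \<in> S \<and> dist d s < inverse (real (Suc n)))"
  have pick: "pick (d, n) \<in> S" "dist d (pick (d, n)) < inverse (real (Suc n))" if "(d, n) \<in> I" for d n
    using someI_ex[of "\<lambda>s. s \<in> S \<and> dist d s < inverse (real (Suc n))"] that
    by (auto simp: I_def pick_def)
  have "countable I" using D(1) by (rule countable_subset[rotated, OF countable_SIGMA]) (auto simp: I_def)
  moreover have "S \<subseteq> closure (pick ` I)"
  proof
    fix s assume s: "s \<in> S"
    show "s \<in> closure (pick ` I)"
      unfolding closure_approachable
    proof (intro allI impI)
      fix e :: real assume "e > 0"
      then obtain n where n: "inverse (real (Suc n)) < e / 2" using reals_Archimedean[of "e / 2"] by auto
      have "s \<in> closure D" "inverse (real (Suc n)) > 0" using D(2) by auto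
      then obtain d where d: "d \<in> D" "dist d s < inverse (real (Suc n))"
        unfolding closure_approachable by blast
      then have dn: "(d, n) \<in> I" using s by (auto simp: I_def)
      have "dist (pick (d, n)) s \<le> dist d (pick (d, n)) + dist d s" by (rule dist_triangle3)
      then have "dist (pick (d, n)) s < e" using pick(2)[OF dn] d(2) n by linarith
      then show "\<exists>y\<in>pick ` I. dist y s < e" using dn by blast
    qed
  qed
  moreover have "pick ` I \<subseteq> S" using pick(1) by auto
  ultimately show ?thesis unfolding separable_set_def by blast
qed

section \<open>Reduction to the case of trivial \<open>K\<close>-spaces\<close>

lemma orth_proj_on_restrict:
  assumes R: "orth_proj_on UNIV R" and RV: "\<And>v. v \<in> V \<Longrightarrow> R v \<in> V"
  shows "orth_proj_on V R"
proof -
  have "bounded_op_on UNIV R" using R by (simp add: orth_proj_on_def)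
  then obtain K where "\<And>x. norm (R x) \<le> K * norm x" unfolding bounded_op_on_def by blast
  then have "bounded_op_on V R"
    using RV bounded_op_on_UNIV_linear(2,3)[OF \<open>bounded_op_on UNIV R\<close>]
    unfolding bounded_op_on_def by auto
  then show ?thesis using R by (simp add: orth_proj_on_def)
qed

lemma Kset_mono: "V \<subseteq> W \<Longrightarrow> Kset V R S \<subseteq> Kset W R S"
  by (auto simp: Kset_def)

locale proj_pair =
  fixes P Q :: "'a::chilbert \<Rightarrow> 'a"
  assumes P: "orth_proj_on UNIV P" and Q: "orth_proj_on UNIV Q"
begin

lemmas P_linear = bounded_op_on_UNIV_linear[OF P[unfolded orth_proj_on_def, THEN conjunct1]]
lemmas Q_linear = bounded_op_on_UNIV_linear[OF Q[unfolded orth_proj_on_def, THEN conjunct1]]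

lemma P_idem: "P (P x) = P x"
  using P by (simp add: orth_proj_on_def)

lemma P_adj: "cinner (P x) y = cinner x (P y)" and Q_adj: "cinner (Q x) y = cinner x (Q y)"
  using P Q by (auto simp: orth_proj_on_def)

definition K1 :: "'a set" where "K1 = {x. P x = x \<and> Q x = 0}"
definition K2 :: "'a set" where "K2 = {x. P x = 0 \<and> Q x = x}"
definition H0 :: "'a set" where "H0 = orth_compl (K1 \<union> K2)"

lemma P_diff: "P (x - y) = P x - P y"
  using P_linear(2)[of x "(-1) *\<^sub>C y"] P_linear(3)[of "-1" y] by (simp flip: minus_eq_scaleC)

lemma Kset_P_Q: "Kset UNIV P Q = K1"
proof -
  have "x \<in> range P \<longleftrightarrow> P x = x" for x
    using P_idem by (metis rangeE rangeI)
  then show ?thesis unfolding Kset_def K1_def by auto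
qed

lemma Kset_one_minus: "Kset UNIV (one_minus P) (one_minus Q) = K2"
proof -
  have "x \<in> range (\<lambda>x. x - P x) \<longleftrightarrow> P x = 0" for x
  proof
    assume "x \<in> range (\<lambda>x. x - P x)"
    then show "P x = 0" by (auto simp: P_diff P_idem)
  next
    assume "P x = 0"
    then have "x = x - P x" by simp
    then show "x \<in> range (\<lambda>x. x - P x)" by (rule range_eqI)
  qed
  then show ?thesis unfolding Kset_def K2_def one_minus_def by auto
qed

lemma closed_csubspace_K1: "closed_csubspace K1" and closed_csubspace_K2: "closed_csubspace K2"
proof -
  have P_cont: "continuous_on UNIV P" and Q_cont: "continuous_on UNIV Q"
    using linear_continuous_on[OF P_linear(1)] linear_continuous_on[OF Q_linear(1)] by auto
  have "closed {x. P x = x}" "closed {x. P x = 0}" "closed {x. Q x = x}" "closed {x. Q x = 0}"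
    by (intro closed_Collect_eq P_cont Q_cont continuous_on_id continuous_on_const)+
  moreover have "K1 = {x. P x = x} \<inter> {x. Q x = 0}" "K2 = {x. P x = 0} \<inter> {x. Q x = x}"
    by (auto simp: K1_def K2_def)
  moreover have "csubspace K1" "csubspace K2"
    unfolding csubspace_def K1_def K2_def by (auto simp: P_linear Q_linear)
  ultimately show "closed_csubspace K1" "closed_csubspace K2"
    by (auto simp: closed_csubspace_def)
qed

lemma closed_csubspace_H0: "closed_csubspace H0"
  unfolding H0_def by (rule closed_csubspace_orth_compl)

lemma K1_K2_orthogonal: "a \<in> K1 \<Longrightarrow> b \<in> K2 \<Longrightarrow> cinner a b = 0"
  using P_adj[of a b] by (auto simp: K1_def K2_def)

lemma H0_orthogonal: "m \<in> K1 \<union> K2 \<Longrightarrow> c \<in> H0 \<Longrightarrow> cinner m c = 0"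
  by (auto simp: H0_def orth_compl_def)

lemma H0_Int: "x \<in> K1 \<union> K2 \<Longrightarrow> x \<in> H0 \<Longrightarrow> x = 0"
  using H0_orthogonal[of x x] by (simp add: cinner_self_eq_0)

lemma P_H0: "c \<in> H0 \<Longrightarrow> P c \<in> H0" and Q_H0: "c \<in> H0 \<Longrightarrow> Q c \<in> H0"
  unfolding H0_def orth_compl_def
  by (auto simp: P_adj[symmetric] Q_adj[symmetric] K1_def K2_def)

lemma orth_proj_on_H0: "orth_proj_on H0 P" "orth_proj_on H0 Q"
  using orth_proj_on_restrict P Q P_H0 Q_H0 by blast+

lemma Kset_H0: "Kset H0 P Q = {0}" "Kset H0 (one_minus P) (one_minus Q) = {0}"
proof -
  have "Kset H0 P Q \<subseteq> K1 \<inter> H0" "Kset H0 (one_minus P) (one_minus Q) \<subseteq> K2 \<inter> H0"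
    using Kset_mono[of H0 UNIV] Kset_P_Q Kset_one_minus by (auto simp: Kset_def)
  moreover have "0 \<in> Kset H0 P Q" "0 \<in> Kset H0 (one_minus P) (one_minus Q)"
    using closed_csubspace_H0 P_linear(4) Q_linear(4)
    by (auto simp: Kset_def one_minus_def closed_csubspace_def csubspace_def image_iff intro!: bexI[of _ 0])
  ultimately show "Kset H0 P Q = {0}" "Kset H0 (one_minus P) (one_minus Q) = {0}"
    using H0_Int by blast+
qed

lemma proj_K1_in: "proj K1 x \<in> K1" and proj_K2_in: "proj K2 x \<in> K2"
  using proj_in closed_csubspace_K1 closed_csubspace_K2 by blast+

definition proj_H0 :: "'a \<Rightarrow> 'a" where "proj_H0 x = x - proj K1 x - proj K2 x"

lemma proj_H0_in: "proj_H0 x \<in> H0"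
proof -
  have "cinner m (proj_H0 x) = 0" if m: "m \<in> K1" for m
    using proj_orthogonal[OF closed_csubspace_K1 m, of x] K1_K2_orthogonal[OF m proj_K2_in]
    by (simp add: proj_H0_def cinner_diff_right)
  moreover have "cinner m (proj_H0 x) = 0" if m: "m \<in> K2" for m
    using proj_orthogonal[OF closed_csubspace_K2 m, of x]
      cinner_eq_0_sym[OF K1_K2_orthogonal[OF proj_K1_in m]]
    by (simp add: proj_H0_def cinner_diff_right)
  ultimately show ?thesis by (auto simp: H0_def orth_compl_def)
qed

lemma decomposition: "x = proj K1 x + proj K2 x + proj_H0 x"
  by (simp add: proj_H0_def)

lemma decomposition_unique:
  assumes a: "a \<in> K1" and b: "b \<in> K2" and c: "c \<in> H0"
  shows "proj K1 (a + b + c) = a" "proj K2 (a + b + c) = b" "proj_H0 (a + b + c) = c"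
proof -
  show K1: "proj K1 (a + b + c) = a"
    using K1_K2_orthogonal[OF _ b] H0_orthogonal[OF _ c]
    by (intro proj_unique[OF closed_csubspace_K1 a]) (simp add: cinner_add_right)
  show K2: "proj K2 (a + b + c) = b"
    using cinner_eq_0_sym[OF K1_K2_orthogonal[OF a]] H0_orthogonal[OF _ c]
    by (intro proj_unique[OF closed_csubspace_K2 b]) (simp add: cinner_add_right)
  show "proj_H0 (a + b + c) = c" by (simp add: proj_H0_def K1 K2)
qed

lemma P_sum: "a \<in> K1 \<Longrightarrow> b \<in> K2 \<Longrightarrow> P (a + b + c) = a + P c"
  and Q_sum: "a \<in> K1 \<Longrightarrow> b \<in> K2 \<Longrightarrow> Q (a + b + c) = b + Q c"
  by (simp_all add: P_linear(2) Q_linear(2) K1_def K2_def)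

lemma cinner_sum:
  assumes "a \<in> K1" "a' \<in> K1" "b \<in> K2" "b' \<in> K2" "c \<in> H0" "c' \<in> H0"
  shows "cinner (a + b + c) (a' + b' + c') = cinner a a' + cinner b b' + cinner c c'"
  using assms K1_K2_orthogonal H0_orthogonal cinner_eq_0_sym[OF K1_K2_orthogonal]
    cinner_eq_0_sym[OF H0_orthogonal]
  by (simp add: cinner_add_left cinner_add_right)

subsection \<open>A swapping unitary maps \<open>K\<^sub>1\<close> onto \<open>K\<^sub>2\<close>\<close>

lemma swappable_imp_same_hilbert_dim:
  assumes "unitarily_swappable UNIV P Q"
  shows "same_hilbert_dim K1 K2"
proof -
  obtain U Ui where U: "unitary_on UNIV U" and Ui: "\<And>x. U (Ui x) = x" "\<And>x. Ui (U x) = x"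
    and UP: "\<And>x. U (P (Ui x)) = Q x" and UQ: "\<And>x. U (Q (Ui x)) = P x"
    using assms unfolding unitarily_swappable_def by blast
  have U_cinner: "\<And>x y. cinner (U x) (U y) = cinner x y" using U by (simp add: unitary_on_def)
  have U0: "U 0 = 0" by (rule cinner_preserving_zero[OF csubspace_UNIV U_cinner])
  have "U ` K1 = K2"
  proof
    show "U ` K1 \<subseteq> K2"
    proof
      fix y assume "y \<in> U ` K1"
      then obtain k where "k \<in> K1" "y = U k" by blast
      moreover have "Q (U k) = U (P k)" "P (U k) = U (Q k)" using UP[of "U k"] UQ[of "U k"] Ui(2) by simp_all
      ultimately show "y \<in> K2" using U0 by (simp add: K1_def K2_def)
    qed
    show "K2 \<subseteq> U ` K1"
    proof
      fix y assume "y \<in> K2"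
      then have "U (P (Ui y)) = U (Ui y)" "U (Q (Ui y)) = U 0" using UP UQ Ui U0 by (auto simp: K2_def)
      then have "P (Ui y) = Ui y" "Q (Ui y) = 0" using inj_if_cinner_preserving[OF U_cinner] by (simp_all add: inj_eq)
      then have "Ui y \<in> K1" by (simp add: K1_def)
      then show "y \<in> U ` K1" using Ui(1)[of y] by (metis image_eqI)
    qed
  qed
  moreover obtain B where B: "orthonormal_basis_of K1 B"
    using orthonormal_basis_exists[OF closed_csubspace_K1] by blast
  ultimately have "orthonormal_basis_of K2 (U ` B)"
    using orthonormal_basis_of_image[OF U_cinner _ B] closed_csubspace_K2 by simp
  moreover have "bij_betw U B (U ` B)"
    using inj_if_cinner_preserving[OF U_cinner] by (auto simp: bij_betw_def inj_on_def dest: injD)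
  ultimately show ?thesis unfolding same_hilbert_dim_def using B by blast
qed

end

subsection \<open>Gluing unitaries on \<open>K\<^sub>1 \<oplus> K\<^sub>2\<close> and on \<open>H\<^sub>0\<close>\<close>

locale proj_pair_iso = proj_pair +
  fixes T :: "'a \<Rightarrow> 'a"
  assumes T_onto: "T ` K1 = K2"
    and T_cinner: "x \<in> K1 \<Longrightarrow> y \<in> K1 \<Longrightarrow> cinner (T x) (T y) = cinner x y"
begin

definition S :: "'a \<Rightarrow> 'a" where "S = inv_into K1 T"

lemma T_K1: "x \<in> K1 \<Longrightarrow> T x \<in> K2"
  using T_onto by blast

lemma S_K2: "y \<in> K2 \<Longrightarrow> S y \<in> K1" and T_S: "y \<in> K2 \<Longrightarrow> T (S y) = y"
  unfolding S_def using T_onto by (auto intro: inv_into_into f_inv_into_f)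

lemma S_T: "x \<in> K1 \<Longrightarrow> S (T x) = x"
proof -
  have "inj_on T K1"
  proof (rule inj_onI)
    fix x y assume "x \<in> K1" "y \<in> K1" "T x = T y"
    then have "dist (T x) (T y) = dist x y"
      by (intro dist_eq_if_cinner_preserving T_cinner)
    then show "x = y" using \<open>T x = T y\<close> by simp
  qed
  then show "x \<in> K1 \<Longrightarrow> S (T x) = x" unfolding S_def by (rule inv_into_f_f)
qed

lemma T_0: "T 0 = 0"
  using closed_csubspace_K1 T_cinner by (intro cinner_preserving_zero) (auto simp: closed_csubspace_def)

lemma S_0: "S 0 = 0"
  using S_T[of 0] T_0 closed_csubspace_K1 by (simp add: closed_csubspace_def csubspace_0)

definition glue :: "('a \<Rightarrow> 'a) \<Rightarrow> 'a \<Rightarrow> 'a" where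
  "glue W x = S (proj K2 x) + T (proj K1 x) + W (proj_H0 x)"

lemma glue_components: "S (proj K2 x) \<in> K1" "T (proj K1 x) \<in> K2"
  using S_K2 T_K1 proj_K1_in proj_K2_in by blast+

lemma glue_sum: "a \<in> K1 \<Longrightarrow> b \<in> K2 \<Longrightarrow> c \<in> H0 \<Longrightarrow> glue W (a + b + c) = S b + T a + W c"
  by (simp add: glue_def decomposition_unique)

lemma glue_glue:
  assumes "\<And>c. c \<in> H0 \<Longrightarrow> W' c \<in> H0" "\<And>c. c \<in> H0 \<Longrightarrow> W (W' c) = c"
  shows "glue W (glue W' x) = x"
proof -
  have "glue W (glue W' x) = S (T (proj K1 x)) + T (S (proj K2 x)) + W (W' (proj_H0 x))"
    unfolding glue_def[of W'] using glue_components assms(1) proj_H0_in by (simp add: glue_sum)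
  also have "\<dots> = x"
    using S_T[OF proj_K1_in] T_S[OF proj_K2_in] assms(2)[OF proj_H0_in]
    by (simp flip: decomposition)
  finally show ?thesis .
qed

lemma glue_cinner:
  assumes W: "\<And>c. c \<in> H0 \<Longrightarrow> W c \<in> H0"
    and W_cinner: "\<And>c d. c \<in> H0 \<Longrightarrow> d \<in> H0 \<Longrightarrow> cinner (W c) (W d) = cinner c d"
  shows "cinner (glue W x) (glue W y) = cinner x y"
proof -
  have S_cinner: "cinner (S u) (S v) = cinner u v" if "u \<in> K2" "v \<in> K2" for u v
    using T_cinner[OF S_K2 S_K2] T_S that by simp
  have "cinner (glue W x) (glue W y) = cinner (S (proj K2 x)) (S (proj K2 y))
      + cinner (T (proj K1 x)) (T (proj K1 y)) + cinner (W (proj_H0 x)) (W (proj_H0 y))"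
    unfolding glue_def by (intro cinner_sum glue_components W proj_H0_in)
  also have "\<dots> = cinner (proj K2 x) (proj K2 y) + cinner (proj K1 x) (proj K1 y)
      + cinner (proj_H0 x) (proj_H0 y)"
    by (simp add: S_cinner T_cinner W_cinner proj_K1_in proj_K2_in proj_H0_in)
  also have "\<dots> = cinner (proj K1 x + proj K2 x + proj_H0 x) (proj K1 y + proj K2 y + proj_H0 y)"
    by (simp add: cinner_sum proj_K1_in proj_K2_in proj_H0_in)
  finally show ?thesis by (simp flip: decomposition)
qed

lemma glue_conj:
  assumes Wi: "\<And>c. c \<in> H0 \<Longrightarrow> Wi c \<in> H0"
    and WP: "\<And>c. c \<in> H0 \<Longrightarrow> W (P (Wi c)) = Q c" and WQ: "\<And>c. c \<in> H0 \<Longrightarrow> W (Q (Wi c)) = P c"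
  shows "glue W (P (glue Wi x)) = Q x" "glue W (Q (glue Wi x)) = P x"
proof -
  let ?a = "S (proj K2 x)" and ?b = "T (proj K1 x)" and ?c = "Wi (proj_H0 x)"
  have abc: "?a \<in> K1" "?b \<in> K2" "?c \<in> H0" using glue_components Wi proj_H0_in by auto
  have "glue W (P (glue Wi x)) = glue W (?a + 0 + P ?c)"
    unfolding glue_def[of Wi] using abc by (simp add: P_sum)
  also have "\<dots> = proj K2 x + Q (proj_H0 x)"
    using abc P_H0 glue_sum[of ?a 0] closed_csubspace_K2 T_S[OF proj_K2_in] S_0 WP[OF proj_H0_in]
    by (simp add: closed_csubspace_def csubspace_0)
  also have "\<dots> = Q x"
    using Q_sum[OF proj_K1_in[of x] proj_K2_in[of x], of "proj_H0 x"] by (simp flip: decomposition)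
  finally show "glue W (P (glue Wi x)) = Q x" .
  have "glue W (Q (glue Wi x)) = glue W (0 + ?b + Q ?c)"
    unfolding glue_def[of Wi] using abc by (simp add: Q_sum)
  also have "\<dots> = proj K1 x + P (proj_H0 x)"
    using abc Q_H0 glue_sum[of 0 ?b] closed_csubspace_K1 S_T[OF proj_K1_in] T_0 WQ[OF proj_H0_in]
    by (simp add: closed_csubspace_def csubspace_0)
  also have "\<dots> = P x"
    using P_sum[OF proj_K1_in[of x] proj_K2_in[of x], of "proj_H0 x"] by (simp flip: decomposition)
  finally show "glue W (Q (glue Wi x)) = P x" .
qed

lemma swappable_if_swappable_H0:
  assumes "unitarily_swappable H0 P Q"
  shows "unitarily_swappable UNIV P Q"
proof -
  obtain W Wi where W: "unitary_on H0 W" and Wi: "\<And>c. c \<in> H0 \<Longrightarrow> Wi c \<in> H0 \<and> W (Wi c) = c \<and> Wi (W c) = c"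
    and WP: "\<And>c. c \<in> H0 \<Longrightarrow> W (P (Wi c)) = Q c" and WQ: "\<And>c. c \<in> H0 \<Longrightarrow> W (Q (Wi c)) = P c"
    using assms unfolding unitarily_swappable_def by blast
  have W_H0: "\<And>c. c \<in> H0 \<Longrightarrow> W c \<in> H0"
    and W_cinner: "\<And>c d. c \<in> H0 \<Longrightarrow> d \<in> H0 \<Longrightarrow> cinner (W c) (W d) = cinner c d"
    using W by (auto simp: unitary_on_def bounded_op_on_def)
  have "unitary_on UNIV (glue W)"
    using glue_cinner[OF W_H0 W_cinner] glue_glue[of Wi W] Wi
    by (intro unitary_on_UNIV_if_cinner_preserving) (auto intro: range_eqI[OF sym])
  moreover have "glue W (glue Wi x) = x" "glue Wi (glue W x) = x" for x
    using glue_glue W_H0 Wi by auto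
  ultimately show ?thesis
    unfolding unitarily_swappable_def using glue_conj[OF _ WP WQ] Wi by blast
qed

end

theorem lemma4:
  fixes P Q :: "'a::chilbert \<Rightarrow> 'a"
  assumes reduced_case:
    "\<And>(V :: 'a set) P' Q'. closed_csubspace V \<Longrightarrow> separable_set V \<Longrightarrow>
       orth_proj_on V P' \<Longrightarrow> orth_proj_on V Q' \<Longrightarrow>
       Kset V P' Q' = {0} \<Longrightarrow> Kset V (one_minus P') (one_minus Q') = {0} \<Longrightarrow>
       unitarily_swappable V P' Q'"
    and sep: "separable_set (UNIV :: 'a set)"
    and P: "orth_proj_on UNIV P" and Q: "orth_proj_on UNIV Q"
  shows "unitarily_swappable UNIV P Q \<longleftrightarrow>
         same_hilbert_dim (Kset UNIV P Q) (Kset UNIV (one_minus P) (one_minus Q))"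
proof -
  interpret proj_pair P Q using P Q by unfold_locales
  have swappable_H0: "unitarily_swappable H0 P Q"
    using reduced_case[OF closed_csubspace_H0 separable_set_subset[OF sep] orth_proj_on_H0 Kset_H0] .
  have "unitarily_swappable UNIV P Q" if dim: "same_hilbert_dim K1 K2"
  proof -
    obtain T where "T ` K1 = K2" "\<And>x y. x \<in> K1 \<Longrightarrow> y \<in> K1 \<Longrightarrow> cinner (T x) (T y) = cinner x y"
      using same_hilbert_dim_imp_unitary_equivalent[OF closed_csubspace_K1 closed_csubspace_K2 dim] by blast
    then interpret proj_pair_iso P Q T by unfold_locales
    show ?thesis using swappable_if_swappable_H0[OF swappable_H0] .
  qed
  then show ?thesis unfolding Kset_P_Q Kset_one_minus using swappable_imp_same_hilbert_dim by blast
qed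

end
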